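(* Let $A\subseteq\Gamma$ be a finite set and $D\subseteq A-A$, and put $\sigma:=\sum_{s\in D}|A-A_s|$. Then there are $l\ge|D|^2/(4\sigma)$ elements $s_1,\dots,s_l\in D$ such that the sets $A_{s_1},\dots,A_{s_l}$ are pairwise disjoint. In particular, if $|A^2-\Delta(A)|\le|A-A|^2/M$ for a real $M>0$, then there are at least $M/4$ pairwise disjoint sets $A_{s_1},\dots,A_{s_l}$.
   Context: $\Gamma$ is an abelian group. $A_s=A\cap(A-s)$. $A^2-\Delta(A)=\{(a_1-a,a_2-a):a_1,a_2,a\in A\}\subseteq\Gamma^2$. *)

theory Defs
  imports Complex_Main
begin

definition diffset :: "'a::ab_group_add set \<Rightarrow> 'a set \<Rightarrow> 'a set" where
  "diffset X Y = {x - y | x y. x \<in> X \<and> y \<in> Y}"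

definition translate_minus :: "'a::ab_group_add set \<Rightarrow> 'a \<Rightarrow> 'a set" where
  "translate_minus A s = (\<lambda>a. a - s) ` A"

definition Ash :: "'a::ab_group_add set \<Rightarrow> 'a \<Rightarrow> 'a set" where
  "Ash A s = A \<inter> translate_minus A s"

definition sq_minus_diag :: "'a::ab_group_add set \<Rightarrow> ('a \<times> 'a) set" where
  "sq_minus_diag A = {(a1 - a, a2 - a) | a1 a2 a. a1 \<in> A \<and> a2 \<in> A \<and> a \<in> A}"

end

theory Submission
  imports Defs "HOL-Library.Disjoint_Sets"
begin

text \<open>If \<open>A\<^sub>s\<close> meets \<open>A\<^sub>t\<close> at \<open>x\<close>, then \<open>s = (x + s) - x \<in> A - A\<^sub>t\<close>; so the sets
  \<open>A - A\<^sub>t\<close> bound the conflicts of \<open>t\<close>. By Markov's inequality at least half of \<open>D\<close>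
  consists of \<open>t\<close> with \<open>|A - A\<^sub>t| \<le> 2\<sigma>/|D|\<close>, and a maximal pairwise disjoint subfamily
  \<open>S\<close> of these is covered by its sets \<open>A - A\<^sub>t\<close>, whence \<open>|D|/2 \<le> |S| \<cdot> 2\<sigma>/|D|\<close>.
  For the second claim, \<open>(s, x - y) \<mapsto> (x - y, (y + s) - y)\<close> embeds the pairs counted by
  \<open>\<sigma>\<close> (for \<open>D = A - A\<close>) into \<open>A\<^sup>2 - \<Delta>(A)\<close>.\<close>

lemma maximal_disjoint_subfamily_covers:
  assumes "finite D"
    and nonempty: "\<And>t. t \<in> D \<Longrightarrow> X t \<noteq> {}"
    and meets: "\<And>s t. s \<in> D \<Longrightarrow> t \<in> D \<Longrightarrow> X s \<inter> X t \<noteq> {} \<Longrightarrow> s \<in> N t"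
  shows "\<exists>S\<subseteq>D. disjoint_family_on X S \<and> D \<subseteq> (\<Union>t\<in>S. N t)"
proof -
  define F where "F = {S. S \<subseteq> D \<and> disjoint_family_on X S}"
  have "finite F" using \<open>finite D\<close> by (auto simp: F_def)
  moreover have "{} \<in> F" by (simp add: F_def disjoint_family_on_def)
  ultimately obtain S where "S \<in> F" and maximal: "\<And>T. T \<in> F \<Longrightarrow> S \<subseteq> T \<Longrightarrow> S = T"
    using finite_has_maximal[of F] by blast
  have "s \<in> (\<Union>t\<in>S. N t)" if "s \<in> D" for s
  proof (cases "\<exists>t\<in>S. X s \<inter> X t \<noteq> {}")
    case True
    then show ?thesis using meets \<open>s \<in> D\<close> \<open>S \<in> F\<close> by (auto simp: F_def)
  next
    case False
    then have "insert s S \<in> F"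
      using \<open>S \<in> F\<close> \<open>s \<in> D\<close> by (auto simp: F_def disjoint_family_on_def Int_commute)
    then have "s \<in> S" using maximal by blast
    then show ?thesis using False nonempty \<open>s \<in> D\<close> by auto
  qed
  then show ?thesis using \<open>S \<in> F\<close> by (auto simp: F_def)
qed

lemma card_Markov:
  fixes w :: "'a \<Rightarrow> real"
  assumes "finite D" and "\<And>s. s \<in> D \<Longrightarrow> 0 \<le> w s"
  shows "c * card {s\<in>D. c < w s} \<le> sum w D"
proof -
  have "c * card {s\<in>D. c < w s} = (\<Sum>s\<in>{s\<in>D. c < w s}. c)" by simp
  also have "\<dots> \<le> (\<Sum>s\<in>{s\<in>D. c < w s}. w s)" by (rule sum_mono) simp
  also have "\<dots> \<le> sum w D" using assms(1,2) by (intro sum_mono2) auto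
  finally show ?thesis .
qed

lemma card_le_double_card_below_double_mean:
  fixes w :: "'a \<Rightarrow> real"
  assumes "finite D" and nonneg: "\<And>s. s \<in> D \<Longrightarrow> 0 \<le> w s" and "0 < sum w D"
  shows "card D \<le> 2 * card {s\<in>D. w s \<le> 2 * sum w D / card D}"
proof -
  define c where "c = 2 * sum w D / card D"
  define L where "L = {s\<in>D. w s \<le> c}"
  have "card D > 0" using assms(1,3) card_gt_0_iff by fastforce
  have "D - L = {s\<in>D. c < w s}" by (auto simp: L_def)
  then have "c * card (D - L) \<le> sum w D" using card_Markov[OF assms(1) nonneg] by simp
  then have "2 * card (D - L) \<le> card D"
    using \<open>0 < sum w D\<close> \<open>card D > 0\<close> by (simp add: c_def field_simps)
  moreover have "card D = card L + card (D - L)"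
    using \<open>finite D\<close> card_mono[of D L] by (simp add: L_def card_Diff_subset)
  ultimately show ?thesis unfolding L_def c_def by linarith
qed

lemma exists_large_disjoint_subfamily:
  assumes "finite D"
    and nonempty: "\<And>t. t \<in> D \<Longrightarrow> X t \<noteq> {}"
    and meets: "\<And>s t. s \<in> D \<Longrightarrow> t \<in> D \<Longrightarrow> X s \<inter> X t \<noteq> {} \<Longrightarrow> s \<in> N t"
    and finite_N: "\<And>t. t \<in> D \<Longrightarrow> finite (N t)"
  shows "\<exists>S\<subseteq>D. disjoint_family_on X S
           \<and> (real (card D))\<^sup>2 / (4 * (\<Sum>t\<in>D. real (card (N t)))) \<le> real (card S)"
proof (cases "D = {}")
  case True
  then show ?thesis by (auto simp: disjoint_family_on_def)
next
  case False
  define \<sigma> where "\<sigma> = (\<Sum>t\<in>D. real (card (N t)))"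
  define c where "c = 2 * \<sigma> / card D"
  define L where "L = {s\<in>D. real (card (N s)) \<le> c}"
  have "t \<in> N t" if "t \<in> D" for t using meets nonempty that by blast
  then have "1 \<le> card (N t)" if "t \<in> D" for t
    using finite_N that by (metis One_nat_def Suc_leI card_gt_0_iff empty_iff)
  then have "real (card D) \<le> \<sigma>" unfolding \<sigma>_def using sum_mono[of D "\<lambda>_. 1::real"] by force
  moreover have "card D > 0" using False \<open>finite D\<close> by (simp add: card_gt_0_iff)
  ultimately have "\<sigma> > 0" by linarith
  then have light: "card D \<le> 2 * card L"
    using card_le_double_card_below_double_mean[OF \<open>finite D\<close>, of "\<lambda>t. real (card (N t))"]
    by (simp add: L_def c_def \<sigma>_def)
  obtain S where "S \<subseteq> L" "disjoint_family_on X S" and cover: "L \<subseteq> (\<Union>t\<in>S. N t)"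
    using maximal_disjoint_subfamily_covers[of L X N] \<open>finite D\<close> nonempty meets
    by (auto simp: L_def)
  have "finite S" using \<open>S \<subseteq> L\<close> \<open>finite D\<close> by (auto simp: L_def intro: finite_subset)
  have "real (card L) \<le> card (\<Union>t\<in>S. N t)"
    using cover \<open>S \<subseteq> L\<close> \<open>finite S\<close> finite_N by (intro of_nat_mono card_mono) (auto simp: L_def)
  also have "\<dots> \<le> (\<Sum>t\<in>S. real (card (N t)))"
    using card_UN_le[OF \<open>finite S\<close>, of N] by (metis of_nat_le_iff of_nat_sum)
  also have "\<dots> \<le> (\<Sum>t\<in>S. c)" using \<open>S \<subseteq> L\<close> by (intro sum_mono) (auto simp: L_def)
  finally have "card D \<le> 2 * card S * c" using light by simp
  then have "(real (card D))\<^sup>2 \<le> 4 * \<sigma> * card S"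
    using \<open>card D > 0\<close> by (simp add: c_def field_simps power2_eq_square)
  then have "(real (card D))\<^sup>2 / (4 * \<sigma>) \<le> card S"
    using \<open>\<sigma> > 0\<close> by (simp add: divide_le_eq mult.commute mult.left_commute)
  then show ?thesis using \<open>S \<subseteq> L\<close> \<open>disjoint_family_on X S\<close> by (auto simp: \<sigma>_def L_def)
qed

lemma finite_diffset: "finite A \<Longrightarrow> finite B \<Longrightarrow> finite (diffset A B)"
proof -
  have "diffset A B = (\<lambda>(x, y). x - y) ` (A \<times> B)" by (auto simp: diffset_def)
  then show "finite A \<Longrightarrow> finite B \<Longrightarrow> ?thesis" by simp
qed

lemma mem_Ash_iff: "x \<in> Ash A s \<longleftrightarrow> x \<in> A \<and> x + s \<in> A"
  by (auto simp: Ash_def translate_minus_def image_iff intro: bexI[of _ "x + s"])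

lemma Ash_subset: "Ash A s \<subseteq> A"
  by (simp add: Ash_def)

lemma Ash_nonempty:
  assumes "t \<in> diffset A A"
  shows "Ash A t \<noteq> {}"
proof -
  obtain x y where "x \<in> A" "y \<in> A" "t = x - y" using assms by (auto simp: diffset_def)
  then have "y \<in> Ash A t" by (simp add: mem_Ash_iff)
  then show ?thesis by auto
qed

lemma mem_diffset_Ash_if_meets:
  assumes "Ash A s \<inter> Ash A t \<noteq> {}"
  shows "s \<in> diffset A (Ash A t)"
proof -
  obtain x where "x \<in> Ash A s" "x \<in> Ash A t" using assms by blast
  then have "x + s \<in> A" "x \<in> Ash A t" by (simp_all add: mem_Ash_iff)
  moreover have "s = (x + s) - x" by simp
  ultimately show ?thesis unfolding diffset_def by blast
qed

lemma finite_diffset_Ash: "finite A \<Longrightarrow> finite (diffset A (Ash A t))"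
  by (intro finite_diffset) (auto intro: finite_subset[OF Ash_subset])

lemma card_diffset_Ash_pos:
  assumes "finite A" and "t \<in> diffset A A"
  shows "0 < card (diffset A (Ash A t))"
proof -
  obtain y where "y \<in> Ash A t" using Ash_nonempty[OF assms(2)] by blast
  then have "y - y \<in> diffset A (Ash A t)" using Ash_subset unfolding diffset_def by blast
  then show ?thesis using finite_diffset_Ash[OF assms(1)] card_gt_0_iff by blast
qed

lemma exists_large_disjoint_Ash:
  assumes "finite A" and "D \<subseteq> diffset A A"
  shows "\<exists>S\<subseteq>D. disjoint_family_on (Ash A) S
           \<and> (real (card D))\<^sup>2 / (4 * (\<Sum>t\<in>D. real (card (diffset A (Ash A t))))) \<le> card S"
proof (rule exists_large_disjoint_subfamily)
  show "finite D" using assms finite_diffset finite_subset by blast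
  show "Ash A t \<noteq> {}" if "t \<in> D" for t using that assms(2) Ash_nonempty by blast
  show "finite (diffset A (Ash A t))" for t using assms(1) by (rule finite_diffset_Ash)
qed (rule mem_diffset_Ash_if_meets)

lemma sum_card_diffset_Ash_le:
  assumes "finite A"
  shows "(\<Sum>t\<in>diffset A A. card (diffset A (Ash A t))) \<le> card (sq_minus_diag A)"
proof -
  have "sq_minus_diag A \<subseteq> (\<lambda>(a1, a2, a). (a1 - a, a2 - a)) ` (A \<times> A \<times> A)"
    by (auto simp: sq_minus_diag_def image_iff) blast
  then have "finite (sq_minus_diag A)" using assms finite_subset by blast
  moreover have "(\<lambda>(t, u). (u, t)) ` (SIGMA t:diffset A A. diffset A (Ash A t)) \<subseteq> sq_minus_diag A"
  proof clarify
    fix t u assume "u \<in> diffset A (Ash A t)"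
    then obtain x y where "x \<in> A" "y \<in> A" "y + t \<in> A" "u = x - y"
      by (auto simp: diffset_def mem_Ash_iff)
    moreover have "(u, t) = (x - y, (y + t) - y)" using \<open>u = x - y\<close> by simp
    ultimately show "(u, t) \<in> sq_minus_diag A" unfolding sq_minus_diag_def by blast
  qed
  ultimately have "card (SIGMA t:diffset A A. diffset A (Ash A t)) \<le> card (sq_minus_diag A)"
    by (intro card_inj_on_le[of "\<lambda>(t, u). (u, t)"]) (auto simp: inj_on_def)
  then show ?thesis using assms by (simp add: finite_diffset finite_diffset_Ash)
qed

lemma exists_disjoint_Ash_if_card_sq_minus_diag_le:
  fixes M :: real
  assumes "finite A" and "A \<noteq> {}" and "M > 0"
    and small: "card (sq_minus_diag A) \<le> (real (card (diffset A A)))\<^sup>2 / M"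
  shows "\<exists>S\<subseteq>diffset A A. disjoint_family_on (Ash A) S \<and> M / 4 \<le> card S"
proof -
  define \<sigma> where "\<sigma> = (\<Sum>t\<in>diffset A A. real (card (diffset A (Ash A t))))"
  obtain S where "S \<subseteq> diffset A A" "disjoint_family_on (Ash A) S"
    and large: "(real (card (diffset A A)))\<^sup>2 / (4 * \<sigma>) \<le> card S"
    using exists_large_disjoint_Ash[OF assms(1) order_refl, folded \<sigma>_def] by blast
  obtain a where "a \<in> A" using assms(2) by blast
  then have "a - a \<in> diffset A A" unfolding diffset_def by blast
  then have "\<sigma> > 0" unfolding \<sigma>_def
    using assms(1) card_diffset_Ash_pos finite_diffset by (intro sum_pos) auto
  have "\<sigma> = real (\<Sum>t\<in>diffset A A. card (diffset A (Ash A t)))" by (simp add: \<sigma>_def)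
  also have "\<dots> \<le> card (sq_minus_diag A)" using sum_card_diffset_Ash_le[OF assms(1)] by linarith
  also have "\<dots> \<le> (real (card (diffset A A)))\<^sup>2 / M" by (fact small)
  finally have "M \<le> (real (card (diffset A A)))\<^sup>2 / \<sigma>"
    using \<open>M > 0\<close> \<open>\<sigma> > 0\<close> by (simp add: pos_le_divide_eq mult.commute)
  then have "M / 4 \<le> (real (card (diffset A A)))\<^sup>2 / (4 * \<sigma>)"
    using divide_right_mono[of _ _ 4] by (simp add: divide_divide_eq_left mult.commute)
  then have "M / 4 \<le> card S" using large by linarith
  then show ?thesis using \<open>S \<subseteq> diffset A A\<close> \<open>disjoint_family_on (Ash A) S\<close> by blast
qed

lemma ex_enumeration_disjoint_family_on:
  assumes "finite S" and "S \<subseteq> D" and disjoint: "disjoint_family_on X S"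
  shows "\<exists>s. (\<forall>i<card S. s i \<in> D)
           \<and> (\<forall>i<card S. \<forall>j<card S. i \<noteq> j \<longrightarrow> X (s i) \<inter> X (s j) = {})"
proof -
  obtain s where s: "bij_betw s {0..<card S} S" using ex_bij_betw_nat_finite[OF assms(1)] by blast
  then have range: "s i \<in> S" if "i < card S" for i using that bij_betwE by fastforce
  have "X (s i) \<inter> X (s j) = {}" if "i < card S" "j < card S" "i \<noteq> j" for i j
  proof -
    have "s i \<noteq> s j" using s that by (auto simp: bij_betw_def inj_on_def)
    then show ?thesis using disjoint range that unfolding disjoint_family_on_def by blast
  qed
  then show ?thesis using range assms(2) by blast
qed

theorem proposition8:
  fixes A D :: "'a::ab_group_add set"
  assumes "finite A" and "D \<subseteq> diffset A A"
  shows "(\<exists>(l::nat) (s::nat \<Rightarrow> 'a).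
            real l \<ge> (real (card D))^2 / (4 * (\<Sum>t\<in>D. real (card (diffset A (Ash A t)))))
            \<and> (\<forall>i<l. s i \<in> D)
            \<and> (\<forall>i<l. \<forall>j<l. i \<noteq> j \<longrightarrow> Ash A (s i) \<inter> Ash A (s j) = {}))
       \<and> (\<forall>M::real. M > 0 \<and> A \<noteq> {} \<and>
            real (card (sq_minus_diag A)) \<le> (real (card (diffset A A)))^2 / M \<longrightarrow>
            (\<exists>(l::nat) (s::nat \<Rightarrow> 'a). real l \<ge> M / 4
              \<and> (\<forall>i<l. s i \<in> diffset A A)
              \<and> (\<forall>i<l. \<forall>j<l. i \<noteq> j \<longrightarrow> Ash A (s i) \<inter> Ash A (s j) = {})))"
proof (intro conjI allI impI)
  obtain S where S: "S \<subseteq> D" "disjoint_family_on (Ash A) S"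
    and large: "(real (card D))\<^sup>2 / (4 * (\<Sum>t\<in>D. real (card (diffset A (Ash A t))))) \<le> card S"
    using exists_large_disjoint_Ash[OF assms] by blast
  obtain s where "\<forall>i<card S. s i \<in> D"
    "\<forall>i<card S. \<forall>j<card S. i \<noteq> j \<longrightarrow> Ash A (s i) \<inter> Ash A (s j) = {}"
    using ex_enumeration_disjoint_family_on[OF _ S] S(1) assms
    by (meson finite_diffset finite_subset subset_trans)
  with large show "\<exists>l s. real l \<ge> (real (card D))^2 / (4 * (\<Sum>t\<in>D. real (card (diffset A (Ash A t)))))
            \<and> (\<forall>i<l. s i \<in> D) \<and> (\<forall>i<l. \<forall>j<l. i \<noteq> j \<longrightarrow> Ash A (s i) \<inter> Ash A (s j) = {})"
    by (intro exI[of _ "card S"] exI[of _ s]) simp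
next
  fix M :: real
  assume "M > 0 \<and> A \<noteq> {} \<and> real (card (sq_minus_diag A)) \<le> (real (card (diffset A A)))^2 / M"
  then obtain T where T: "T \<subseteq> diffset A A" "disjoint_family_on (Ash A) T" and large: "M / 4 \<le> card T"
    using exists_disjoint_Ash_if_card_sq_minus_diag_le[OF assms(1)] by blast
  obtain t where "\<forall>i<card T. t i \<in> diffset A A"
    "\<forall>i<card T. \<forall>j<card T. i \<noteq> j \<longrightarrow> Ash A (t i) \<inter> Ash A (t j) = {}"
    using ex_enumeration_disjoint_family_on[OF _ T] T(1) assms(1)
    by (meson finite_diffset finite_subset)
  with large show "\<exists>l s. real l \<ge> M / 4 \<and> (\<forall>i<l. s i \<in> diffset A A)
              \<and> (\<forall>i<l. \<forall>j<l. i \<noteq> j \<longrightarrow> Ash A (s i) \<inter> Ash A (s j) = {})"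
    by (intro exI[of _ "card T"] exI[of _ t]) simp
qed

end
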